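(* Let $A,B,E,C$ define the stochastic system $X_{k+1}=AX_k+BU_k+EW_k$, $Y_k=CX_k$, with i.i.d. disturbances $W_k\in\mathcal L^2$ of known distribution, $(A,B)$ controllable, $(A,C)$ observable, and $T_{\mathrm{ini}}$ an integer not smaller than the lag of $(A,C)$. Assume it is equivalent to the VARX model $Y_k=\hat A\,Y_{[k-T_{\mathrm{ini}},k-1]}+\hat B\,U_{[k-T_{\mathrm{ini}},k-1]}+W_{k-1}$ with $\hat A\in\mathbb R^{n_y\times T_{\mathrm{ini}}n_y}$, $\hat B\in\mathbb R^{n_y\times T_{\mathrm{ini}}n_u}$, $W_k\in\mathcal L^2(\mathbb R^{n_y})$, and that the initial input-output trajectory $(U,Y)_{[1-T_{\mathrm{ini}},0]}$ is deterministic. Let $(u^{\mathrm{ud}},y^{\mathrm{ud}})_{[1-T_{\mathrm{ini}},T]}$ be real data with $y^{\mathrm{ud}}_k=\hat A\,y^{\mathrm{ud}}_{[k-T_{\mathrm{ini}},k-1]}+\hat B\,u^{\mathrm{ud}}_{[k-T_{\mathrm{ini}},k-1]}$ for all $k\in\mathbb I_{[1,T]}$, and let $N\in\mathbb N^+$ satisfy $\operatorname{rank}\begin{bmatrix}\mathcal H_{T_{\mathrm{ini}}+N}(u^{\mathrm{ud}}_{[1,T]})\\ \mathcal H_{T_{\mathrm{ini}}}(y^{\mathrm{ud}}_{[1,T-N]})\end{bmatrix}=(T_{\mathrm{ini}}+N)n_u+T_{\mathrm{ini}}n_y$. With the PCE notation of the context, fix $j\in\mathbb I_{[1,L-1]}$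 and write $k'=k'(j)$, $\bar N=N-k'$. Then real sequences $(\mathsf u^j,\mathsf y^j)_{[1,N]}$ form a trajectory of the $j$-th PCE coefficient dynamics, i.e. with $(\mathsf u^j,\mathsf y^j)_{[1-T_{\mathrm{ini}},0]}=0$, $$\mathsf y^j_k=\hat A\,\mathsf y^j_{[k-T_{\mathrm{ini}},k-1]}+\hat B\,\mathsf u^j_{[k-T_{\mathrm{ini}},k-1]}+\mathsf w^j_{k-1},\quad k\in\mathbb I_{[1,N]},$$ and the causality requirement $\mathsf u^j_k=0$ for $k\in\mathbb I_{[1,k']}$, if and only if there exists $\mathsf g^j\in\mathbb R^{T-N-T_{\mathrm{ini}}+1}$ such that $$(\mathsf u^j,\mathsf y^j)_{[1,k']}=0,\qquad \mathsf y^j_{k'+1}=\mathsf w^{I(j)},$$ $$\begin{bmatrix}\mathcal H_{T_{\mathrm{ini}}-1}(u^{\mathrm{ud}}_{[1,T-N-1]})\\ \mathcal H_{T_{\mathrm{ini}}-1}(y^{\mathrm{ud}}_{[1,T-N-1]})\\ \mathcal H_{\bar N}(u^{\mathrm{ud}}_{[T_{\mathrm{ini}},T-k'-1]})\\ \mathcal H_{\bar N}(y^{\mathrm{ud}}_{[T_{\mathrm{ini}},T-k'-1]})\end{bmatrix}\mathsf g^j=\begin{bmatrix}0_{(T_{\mathrm{ini}}-1)n_u\times1}\\ 0_{(T_{\mathrm{ini}}-1)n_y\times1}\\ \mathsf u^j_{[k'+1,N]}\\ \mathsf y^j_{[k'+1,N]}\end{bmatrix}.$$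
   Context: $\mathcal L^2(\mathbb R^n)$: $\mathbb R^n$-valued random variables with finite second moments. $\mathbb I_{[a,b]}=\{a,\dots,b\}$; $z_{[a,b]}=[z_a^\top,\dots,z_b^\top]^\top$. For $z_{[a,b]}$ with $z_k\in\mathbb R^n$ and $M\le b-a+1$, $\mathcal H_M(z_{[a,b]})$ is the $Mn\times(b-a-M+2)$ block Hankel matrix whose $(r,c)$ block is $z_{a+r+c-2}$. The lag of observable $(A,C)$ is the smallest $\ell$ with $[C^\top,\dots,(CA^{\ell-1})^\top]^\top$ of full column rank. PCE setup: each $W_k$ has an exact finite polynomial chaos expansion $W_k=\sum_{n=0}^{L_w-1}\mathsf w^n\psi^n(\xi_k)$ with $\mathsf w^n\in\mathbb R^{n_y}$, orthogonal polynomials $\psi^n$, $\psi^0=1$, and independent stochastic germs $\xi_k$ (same coefficients for all $k$). The joint basis $\{\phi^j\}_{j=0}^{L-1}$, $L=1+N(L_w-1)$, is $\phi^0=1$ and $\phi^{k(L_w-1)+n}=\psi^n(\xi_k)$ for $k\in\mathbb I_{[0,N-1]}$, $n\in\mathbb I_{[1,L_w-1]}$. Let $\mathcal I_k=\mathbb I_{[1+k(L_w-1),(k+1)(L_w-1)]}$; for $j\ge1$, $k'(j)$ is the $k$ with $j\in\mathcal I_k$, and $I(j)=j-k'(j)(L_w-1)$. The coefficients of $W_k$ in the joint basis are $\mathsf w^j_k=\mathbb E[W]$ if $j=0$, $\mathsf w^{I(j)}$ if $j\in\mathcal I_k$, and $0$ otherwise. The causality requirement stems from inputs/outputs at time $k$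 depending only on $W_0,\dots,W_{k-1}$. *)

theory Defs
  imports "Jordan_Normal_Form.DL_Rank"
begin

text \<open>Sequences of vectors in R^n are modelled as z :: int => nat => real, where
  z k i is the i-th component (i < n) of the vector at time k.\<close>

text \<open>Stacked vector z_[a,b] = [z_a; ...; z_b] with block size n.\<close>
definition stackv :: "nat \<Rightarrow> (int \<Rightarrow> nat \<Rightarrow> real) \<Rightarrow> int \<Rightarrow> int \<Rightarrow> real vec" where
  "stackv n z a b = vec (nat (b - a + 1) * n) (\<lambda>r. z (a + int (r div n)) (r mod n))"

text \<open>Block Hankel matrix H_M(z_[a,b]) with block size n: (M n) x (b-a-M+2) matrix
  whose (r,c) block (1-based) is z_(a+r+c-2).\<close>
definition hankel :: "nat \<Rightarrow> nat \<Rightarrow> (int \<Rightarrow> nat \<Rightarrow> real) \<Rightarrow> int \<Rightarrow> int \<Rightarrow> real mat" where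
  "hankel n M z a b = mat (M * n) (nat (b - a + 2 - int M))
     (\<lambda>(r, c). z (a + int (r div n) + int c) (r mod n))"

definition mrank :: "real mat \<Rightarrow> nat" where
  "mrank A = vec_space.rank (dim_row A) A"

definition zext :: "(int \<Rightarrow> nat \<Rightarrow> real) \<Rightarrow> int \<Rightarrow> nat \<Rightarrow> real" where
  "zext z k = (if k \<ge> 1 then z k else (\<lambda>_. 0))"

text \<open>PCE index bookkeeping: for j >= 1, k'(j) is the k with j in
  I_k = [1 + k(Lw-1), (k+1)(Lw-1)], and I(j) = j - k'(j)(Lw-1).\<close>
definition kprime :: "nat \<Rightarrow> nat \<Rightarrow> nat" where
  "kprime Lw j = (j - 1) div (Lw - 1)"

definition pce_I :: "nat \<Rightarrow> nat \<Rightarrow> nat" where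
  "pce_I Lw j = j - kprime Lw j * (Lw - 1)"

text \<open>Coefficient w^j_k of W_k in the joint basis: EW if j = 0, w^(I(j)) if j in I_k,
  0 otherwise. Here w n is the n-th PCE coefficient vector of W.\<close>
definition pce_coef :: "(nat \<Rightarrow> real) \<Rightarrow> (nat \<Rightarrow> nat \<Rightarrow> real) \<Rightarrow> nat \<Rightarrow> nat \<Rightarrow> nat \<Rightarrow> nat \<Rightarrow> real" where
  "pce_coef EW w Lw j k = (if j = 0 then EW
     else if kprime Lw j = k then w (pce_I Lw j) else (\<lambda>_. 0))"

end

theory Submission
  imports Defs
begin

(* The j-th PCE coefficient of the noise is an impulse w^(I(j)) at time k'.  Hence, with causal
   inputs, the coefficient trajectory vanishes up to k', equals w^(I(j)) at k' + 1 and then follows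
   the noise-free VARX recursion.  Shifted in time by k' + 1 - Tini, its zero-padded tail is a
   noise-free trajectory of length Tini + N - k' - 1 whose first Tini - 1 samples vanish.  Under
   the rank condition every such trajectory is a combination of time shifts of the data: choose g
   to reproduce the whole input window and the first Tini outputs, and the recursion forces the
   remaining outputs to agree.  The block-Hankel equation says exactly that g produces the
   shifted trajectory. *)

lemma (in vec_space) span_eq_carrier_of_dim:
  assumes S: "S \<subseteq> carrier_vec n" and fin: "finite S"
    and dim: "vectorspace.dim class_ring (span_vs S) = n"
  shows "span S = carrier_vec n"
proof -
  have W: "vectorspace class_ring (span_vs S)"
    using S span_is_subspace subspace_def subspace_is_vs by simp
  obtain \<beta> where \<beta>: "finite \<beta>" "vectorspace.basis class_ring (span_vs S) \<beta>"
    using vectorspace.finite_basis_exists[OF W] fin_dim_span[OF fin] S by auto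
  have \<beta>_span: "\<beta> \<subseteq> span S" and "LinearCombinations.module.lin_indpt class_ring (span_vs S) \<beta>"
    using \<beta>(2) vectorspace.basis_def[OF W] by auto
  then have "lin_indpt \<beta>"
    using span_li_not_depend(2) S span_is_submodule by simp
  moreover have "card \<beta> = n" using vectorspace.dim_basis[OF W \<beta>] dim by simp
  moreover have "\<beta> \<subseteq> carrier_vec n" using \<beta>_span span_is_subset2[of S] S by auto
  ultimately have "basis \<beta>"
    using dim_li_is_basis[OF fin_dim \<beta>(1)] dim_is_n by simp
  then have "carrier_vec n \<subseteq> span \<beta>" unfolding basis_def by simp
  also have "\<dots> \<subseteq> span S" using span_is_monotone[OF \<beta>_span] span_span[OF S] by simp
  finally show ?thesis using span_is_subset2[of S] S by auto
qed

lemma solvable_of_full_row_rank: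
  fixes A :: "real mat"
  assumes A: "A \<in> carrier_mat n nc" and rank: "mrank A = n" and b: "b \<in> carrier_vec n"
  obtains g where "g \<in> carrier_vec nc" and "A *\<^sub>v g = b"
proof -
  interpret vec_space "TYPE(real)" n .
  have cols: "set (cols A) \<subseteq> carrier_vec n" using A cols_dim carrier_matD(1) by blast
  have "rank A = n" using rank A unfolding mrank_def by simp
  then have "vectorspace.dim class_ring (span_vs (set (cols A))) = n"
    unfolding rank_def .
  then have "span (set (cols A)) = carrier_vec n"
    using span_eq_carrier_of_dim[OF cols] by simp
  then have "b \<in> col_space A" using b unfolding col_space_def by simp
  then show ?thesis using col_space_eq[OF A] A that by auto
qed

lemma append_rows_mult_vec_eq_iff:
  assumes "A \<in> carrier_mat m nc" and "B \<in> carrier_mat m' nc" and "g \<in> carrier_vec nc"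
    and "a \<in> carrier_vec m"
  shows "(A @\<^sub>r B) *\<^sub>v g = a @\<^sub>v b \<longleftrightarrow> A *\<^sub>v g = a \<and> B *\<^sub>v g = b"
  using assms
  by (simp add: mat_mult_append append_vec_eq[OF mult_mat_vec_carrier[OF assms(1,3)] assms(4)])

lemma all_less_mult_iff_div_mod:
  fixes M n :: nat
  shows "(\<forall>r<M * n. P (r div n) (r mod n)) \<longleftrightarrow> (\<forall>s<M. \<forall>i<n. P s i)"
proof
  assume P: "\<forall>r<M * n. P (r div n) (r mod n)"
  show "\<forall>s<M. \<forall>i<n. P s i"
  proof (intro allI impI)
    fix s i assume "s < M" and "i < n"
    have "s * n + i < (s + 1) * n" using \<open>i < n\<close> by simp
    also have "\<dots> \<le> M * n" using \<open>s < M\<close> by (intro mult_le_mono1) simp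
    finally have "P ((s * n + i) div n) ((s * n + i) mod n)" using P by blast
    then show "P s i" using \<open>i < n\<close> by simp
  qed
next
  assume P: "\<forall>s<M. \<forall>i<n. P s i"
  show "\<forall>r<M * n. P (r div n) (r mod n)"
  proof (intro allI impI)
    fix r assume r: "r < M * n"
    then have "r div n < M" and "r mod n < n"
      by (simp_all add: less_mult_imp_div_less) (metis mod_less_divisor mult_0_right neq0_conv not_less0)
    then show "P (r div n) (r mod n)" using P by blast
  qed
qed

lemma all_atLeastAtMost_shift_iff:
  fixes a b d :: int
  shows "(\<forall>k\<in>{a..b}. P (k + d)) \<longleftrightarrow> (\<forall>k\<in>{a + d..b + d}. P k)"
proof
  assume "\<forall>k\<in>{a..b}. P (k + d)"
  then show "\<forall>k\<in>{a + d..b + d}. P k"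
    by (metis atLeastAtMost_iff diff_add_cancel le_diff_eq diff_le_eq)
qed auto

lemma all_nat_less_iff_all_atLeastAtMost:
  fixes a b :: int
  shows "(\<forall>s<nat (b - a + 1). P (a + int s)) \<longleftrightarrow> (\<forall>t\<in>{a..b}. P t)"
proof
  assume P: "\<forall>s<nat (b - a + 1). P (a + int s)"
  show "\<forall>t\<in>{a..b}. P t"
  proof
    fix t assume "t \<in> {a..b}"
    then have "nat (t - a) < nat (b - a + 1)" and "a + int (nat (t - a)) = t" by auto
    then show "P t" using P by metis
  qed
qed auto

lemma dim_stackv [simp]: "dim_vec (stackv n z a b) = nat (b - a + 1) * n"
  by (simp add: stackv_def)

lemma stackv_eq_iff:
  "stackv n z a b = stackv n z' a b \<longleftrightarrow> (\<forall>t\<in>{a..b}. \<forall>i<n. z t i = z' t i)"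
proof -
  have "stackv n z a b = stackv n z' a b \<longleftrightarrow>
      (\<forall>r<nat (b - a + 1) * n. z (a + int (r div n)) (r mod n) = z' (a + int (r div n)) (r mod n))"
    by (simp add: vec_eq_iff stackv_def)
  also have "\<dots> \<longleftrightarrow> (\<forall>s<nat (b - a + 1). \<forall>i<n. z (a + int s) i = z' (a + int s) i)"
    by (rule all_less_mult_iff_div_mod)
  also have "\<dots> \<longleftrightarrow> (\<forall>t\<in>{a..b}. \<forall>i<n. z t i = z' t i)"
    by (rule all_nat_less_iff_all_atLeastAtMost)
  finally show ?thesis .
qed

lemma stackv_shift: "stackv n (\<lambda>t. z (t + d)) a b = stackv n z (a + d) (b + d)"
  by (simp add: stackv_def algebra_simps)

lemma stackv_zero: "stackv n (\<lambda>_ _. 0) a b = 0\<^sub>v (nat (b - a + 1) * n)"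
  by (simp add: stackv_def zero_vec_def)

definition shift_comb :: "real vec \<Rightarrow> (int \<Rightarrow> nat \<Rightarrow> real) \<Rightarrow> int \<Rightarrow> nat \<Rightarrow> real" where
  "shift_comb g z t i = (\<Sum>c<dim_vec g. g $ c * z (t + int c) i)"

lemma hankel_carrier: "hankel n M z a b \<in> carrier_mat (M * n) (nat (b - a + 2 - int M))"
  by (simp add: hankel_def)

lemma hankel_mult_vec:
  assumes "dim_vec g = nat (b - a + 2 - int M)"
  shows "hankel n M z a b *\<^sub>v g = stackv n (shift_comb g z) a (a + int M - 1)"
  using assms
  by (intro eq_vecI)
     (auto simp: hankel_def stackv_def shift_comb_def scalar_prod_def atLeast0LessThan algebra_simps
       intro!: sum.cong)

lemma mult_stackv_shift_comb:
  assumes "A \<in> carrier_mat m (nat (b - a + 1) * n)" and "i < m"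
  shows "(A *\<^sub>v stackv n (shift_comb g z) a b) $ i
       = (\<Sum>c<dim_vec g. g $ c * (A *\<^sub>v stackv n z (a + int c) (b + int c)) $ i)"
  using assms unfolding shift_comb_def
  by (simp add: scalar_prod_def stackv_def sum_distrib_left sum.swap[of _ "{..<dim_vec g}"] algebra_simps)

locale varx =
  fixes Ahat Bhat :: "real mat" and Tini ny nu :: nat
  assumes Ahat_carrier: "Ahat \<in> carrier_mat ny (Tini * ny)"
    and Bhat_carrier: "Bhat \<in> carrier_mat ny (Tini * nu)"
begin

definition predict :: "(int \<Rightarrow> nat \<Rightarrow> real) \<Rightarrow> (int \<Rightarrow> nat \<Rightarrow> real) \<Rightarrow> int \<Rightarrow> real vec" where
  "predict y u k = Ahat *\<^sub>v stackv ny y (k - int Tini) (k - 1) + Bhat *\<^sub>v stackv nu u (k - int Tini) (k - 1)"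

definition traj_on :: "(int \<Rightarrow> nat \<Rightarrow> real) \<Rightarrow> (int \<Rightarrow> nat \<Rightarrow> real) \<Rightarrow> int \<Rightarrow> int \<Rightarrow> bool" where
  "traj_on y u a b \<longleftrightarrow> (\<forall>k\<in>{a..b}. \<forall>i<ny. y k i = predict y u k $ i)"

lemma predict_cong:
  assumes "\<forall>t\<in>{k - int Tini..k - 1}. \<forall>i<ny. y t i = y' t i"
    and "\<forall>t\<in>{k - int Tini..k - 1}. \<forall>i<nu. u t i = u' t i"
  shows "predict y u k = predict y' u' k"
proof -
  have "stackv ny y (k - int Tini) (k - 1) = stackv ny y' (k - int Tini) (k - 1)"
    and "stackv nu u (k - int Tini) (k - 1) = stackv nu u' (k - int Tini) (k - 1)"
    using assms by (simp_all add: stackv_eq_iff)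
  then show ?thesis by (simp add: predict_def)
qed

lemma predict_eq_zero:
  assumes "\<forall>t\<in>{k - int Tini..k - 1}. \<forall>i<ny. y t i = 0"
    and "\<forall>t\<in>{k - int Tini..k - 1}. \<forall>i<nu. u t i = 0"
  shows "predict y u k = 0\<^sub>v ny"
proof -
  have "predict y u k = predict (\<lambda>_ _. 0) (\<lambda>_ _. 0) k"
    by (rule predict_cong) (use assms in auto)
  also have "\<dots> = 0\<^sub>v ny"
    using Ahat_carrier Bhat_carrier by (auto simp: predict_def stackv_zero)
  finally show ?thesis .
qed

lemma predict_shift: "predict (\<lambda>t. y (t + d)) (\<lambda>t. u (t + d)) k = predict y u (k + d)"
  by (simp add: predict_def stackv_shift algebra_simps)

lemma index_predict_shift_comb:
  assumes i: "i < ny"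
  shows "predict (shift_comb g y) (shift_comb g u) k $ i
       = (\<Sum>c<dim_vec g. g $ c * predict y u (k + int c) $ i)"
proof -
  have A: "Ahat \<in> carrier_mat ny (nat (k - 1 - (k - int Tini) + 1) * ny)"
    and B: "Bhat \<in> carrier_mat ny (nat (k - 1 - (k - int Tini) + 1) * nu)"
    using Ahat_carrier Bhat_carrier by simp_all
  show ?thesis
    using A B i
    by (simp add: predict_def mult_stackv_shift_comb[OF A i] mult_stackv_shift_comb[OF B i]
        distrib_left sum.distrib diff_add_eq)
qed

lemma traj_on_shift_comb:
  assumes "traj_on y u a (b + int (dim_vec g) - 1)"
  shows "traj_on (shift_comb g y) (shift_comb g u) a b"
  unfolding traj_on_def
proof (intro ballI allI impI)
  fix k i assume k: "k \<in> {a..b}" and i: "i < ny"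
  have "y (k + int c) i = predict y u (k + int c) $ i" if "c < dim_vec g" for c
    using assms k i that unfolding traj_on_def by auto
  then show "shift_comb g y k i = predict (shift_comb g y) (shift_comb g u) k $ i"
    by (simp add: shift_comb_def index_predict_shift_comb[OF i])
qed

lemma traj_on_cong:
  assumes y: "\<forall>t\<in>{a - int Tini..b}. \<forall>i<ny. y t i = y' t i"
    and u: "\<forall>t\<in>{a - int Tini..b - 1}. \<forall>i<nu. u t i = u' t i"
  shows "traj_on y u a b \<longleftrightarrow> traj_on y' u' a b"
proof -
  have "predict y u k = predict y' u' k" if "k \<in> {a..b}" for k
    by (rule predict_cong) (use that y u in auto)
  then show ?thesis using y unfolding traj_on_def by auto
qed

lemma traj_on_shift:
  "traj_on (\<lambda>t. y (t + d)) (\<lambda>t. u (t + d)) a b \<longleftrightarrow> traj_on y u (a + d) (b + d)"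
  using all_atLeastAtMost_shift_iff[of a b "\<lambda>k. \<forall>i<ny. y k i = predict y u k $ i" d]
  by (simp add: traj_on_def predict_shift)

lemma traj_on_unique:
  assumes y: "traj_on y u (a + int Tini) b" and y': "traj_on y' u' (a + int Tini) b"
    and u: "\<forall>t\<in>{a..b - 1}. \<forall>i<nu. u t i = u' t i"
    and init: "\<forall>t\<in>{a..a + int Tini - 1}. \<forall>i<ny. y t i = y' t i"
  shows "\<forall>t\<in>{a..b}. \<forall>i<ny. y t i = y' t i"
proof
  fix t assume "t \<in> {a..b}"
  then show "\<forall>i<ny. y t i = y' t i"
  proof (induction "nat (t - a)" arbitrary: t rule: less_induct)
    case less
    show ?case
    proof (cases "t < a + int Tini")
      case True
      then show ?thesis using init less.prems by auto
    next
      case False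
      have "\<forall>s\<in>{t - int Tini..t - 1}. \<forall>i<ny. y s i = y' s i"
        using less.hyps less.prems False by auto
      then have "predict y u t = predict y' u' t"
        by (rule predict_cong) (use u less.prems False in auto)
      then show ?thesis using y y' less.prems False unfolding traj_on_def by auto
    qed
  qed
qed

(* A VARX version of Willems' fundamental lemma. *)
lemma traj_on_iff_data_comb:
  assumes data: "traj_on yd ud 1 (int T)"
    and rank: "mrank (hankel nu (Tini + N) ud 1 (int T) @\<^sub>r hankel ny Tini yd 1 (int T - int N))
               = (Tini + N) * nu + Tini * ny"
    and T: "Tini + N \<le> T" and L: "L \<le> int Tini + int N"
  shows "traj_on y u (int Tini + 1) L \<longleftrightarrow>
    (\<exists>g\<in>carrier_vec (T - N - Tini + 1).
       (\<forall>t\<in>{1..L}. \<forall>i<nu. shift_comb g ud t i = u t i)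
     \<and> (\<forall>t\<in>{1..L}. \<forall>i<ny. shift_comb g yd t i = y t i))"
    (is "_ \<longleftrightarrow> (\<exists>g\<in>carrier_vec ?C. ?fit_u g \<and> ?fit_y g)")
proof -
  have comb_traj: "traj_on (shift_comb g yd) (shift_comb g ud) (int Tini + 1) L"
    if "g \<in> carrier_vec ?C" for g
    by (rule traj_on_shift_comb) (use data T L that in \<open>auto simp: traj_on_def\<close>)
  show ?thesis
  proof
    assume traj: "traj_on y u (int Tini + 1) L"
    let ?Hu = "hankel nu (Tini + N) ud 1 (int T)" and ?Hy = "hankel ny Tini yd 1 (int T - int N)"
    have cols: "nat (int T - 1 + 2 - int (Tini + N)) = ?C" "nat (int T - int N - 1 + 2 - int Tini) = ?C"
      using T by simp_all
    have Hu: "?Hu \<in> carrier_mat ((Tini + N) * nu) ?C" and Hy: "?Hy \<in> carrier_mat (Tini * ny) ?C"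
      using hankel_carrier[of nu "Tini + N" ud 1 "int T"] hankel_carrier[of ny Tini yd 1 "int T - int N"]
      unfolding cols by simp_all
    have su: "stackv nu u 1 (int Tini + int N) \<in> carrier_vec ((Tini + N) * nu)"
      and sy: "stackv ny y 1 (int Tini) \<in> carrier_vec (Tini * ny)"
      by (simp_all add: carrier_vecI nat_int_add)
    obtain g where g: "g \<in> carrier_vec ?C"
      and "(?Hu @\<^sub>r ?Hy) *\<^sub>v g = stackv nu u 1 (int Tini + int N) @\<^sub>v stackv ny y 1 (int Tini)"
      using solvable_of_full_row_rank[OF carrier_append_rows[OF Hu Hy] rank append_carrier_vec[OF su sy]]
      by blast
    then have "?Hu *\<^sub>v g = stackv nu u 1 (int Tini + int N)" and "?Hy *\<^sub>v g = stackv ny y 1 (int Tini)"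
      using append_rows_mult_vec_eq_iff[OF Hu Hy g su] by simp_all
    then have u_window: "\<forall>t\<in>{1..int Tini + int N}. \<forall>i<nu. shift_comb g ud t i = u t i"
      and y_init: "\<forall>t\<in>{1..int Tini}. \<forall>i<ny. shift_comb g yd t i = y t i"
      using g cols by (simp_all add: hankel_mult_vec stackv_eq_iff)
    have "?fit_y g"
      by (rule traj_on_unique) (use comb_traj[OF g] traj u_window y_init L in \<open>auto simp: add.commute\<close>)
    moreover have "?fit_u g" using u_window L by auto
    ultimately show "\<exists>g\<in>carrier_vec ?C. ?fit_u g \<and> ?fit_y g" using g by blast
  next
    assume "\<exists>g\<in>carrier_vec ?C. ?fit_u g \<and> ?fit_y g"
    then obtain g where g: "g \<in> carrier_vec ?C" and fit: "?fit_u g" "?fit_y g" by blast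
    have "traj_on (shift_comb g yd) (shift_comb g ud) (int Tini + 1) L \<longleftrightarrow>
        traj_on y u (int Tini + 1) L"
      by (rule traj_on_cong) (use fit in auto)
    then show "traj_on y u (int Tini + 1) L" using comb_traj[OF g] by simp
  qed
qed

lemma predict_zext_eq_zero:
  assumes "\<forall>t\<in>{1..k - 1}. \<forall>i<ny. y t i = 0" and "\<forall>t\<in>{1..k - 1}. \<forall>i<nu. u t i = 0"
  shows "predict (zext y) (zext u) k = 0\<^sub>v ny"
  by (rule predict_eq_zero) (use assms in \<open>auto simp: zext_def\<close>)

lemma impulse_response_iff:
  assumes K: "K < N"
  shows "((\<forall>k\<in>{1..int N}. \<forall>i<ny. y k i =
             predict (zext y) (zext u) k $ i + (if K = nat (k - 1) then e else (\<lambda>_. 0)) i)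
          \<and> (\<forall>k\<in>{1..int K}. \<forall>i<nu. u k i = 0))
     \<longleftrightarrow> (\<forall>k\<in>{1..int K}. (\<forall>i<nu. u k i = 0) \<and> (\<forall>i<ny. y k i = 0))
        \<and> (\<forall>i<ny. y (int K + 1) i = e i)
        \<and> traj_on (zext y) (zext u) (int K + 2) (int N)"
    (is "?dyn \<and> ?causal \<longleftrightarrow> ?zero \<and> ?impulse \<and> ?tail")
proof
  assume "?dyn \<and> ?causal"
  then have dyn: "\<And>k i. k \<in> {1..int N} \<Longrightarrow> i < ny \<Longrightarrow>
      y k i = predict (zext y) (zext u) k $ i + (if K = nat (k - 1) then e else (\<lambda>_. 0)) i"
    and causal: ?causal
    by auto
  have y_zero: "\<forall>k\<in>{1..int m}. \<forall>i<ny. y k i = 0" if "m \<le> K" for m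
    using that
  proof (induction m)
    case 0
    then show ?case by simp
  next
    case (Suc m)
    have "predict (zext y) (zext u) (int m + 1) = 0\<^sub>v ny"
      by (rule predict_zext_eq_zero) (use Suc causal in auto)
    then have new: "\<forall>i<ny. y (int m + 1) i = 0" using dyn[of "int m + 1"] Suc.prems K by auto
    show ?case
    proof (intro ballI allI impI)
      fix k i assume k: "k \<in> {1..int (Suc m)}" and i: "i < ny"
      then consider "k \<in> {1..int m}" | "k = int m + 1" by fastforce
      then show "y k i = 0" using Suc new i by cases auto
    qed
  qed
  have "predict (zext y) (zext u) (int K + 1) = 0\<^sub>v ny"
    by (rule predict_zext_eq_zero) (use y_zero causal in auto)
  then have ?impulse using dyn[of "int K + 1"] K by auto
  moreover have ?tail
    unfolding traj_on_def
  proof (intro ballI allI impI)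
    fix k i assume k: "k \<in> {int K + 2..int N}" and i: "i < ny"
    then have "int K + 2 \<le> k" by simp
    then have "K \<noteq> nat (k - 1)" by arith
    then show "zext y k i = predict (zext y) (zext u) k $ i" using dyn[of k i] k i by (simp add: zext_def)
  qed
  ultimately show "?zero \<and> ?impulse \<and> ?tail" using y_zero causal by auto
next
  assume "?zero \<and> ?impulse \<and> ?tail"
  then have zero: ?zero and impulse: ?impulse and tail: ?tail by auto
  have "y k i = predict (zext y) (zext u) k $ i + (if K = nat (k - 1) then e else (\<lambda>_. 0)) i"
    if k: "k \<in> {1..int N}" and i: "i < ny" for k i
  proof (cases "k \<le> int K + 1")
    case True
    have "predict (zext y) (zext u) k = 0\<^sub>v ny"
      by (rule predict_zext_eq_zero) (use zero True in auto)
    then show ?thesis using zero impulse True k i by (cases "k = int K + 1") auto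
  next
    case False
    then show ?thesis using tail k i by (auto simp: traj_on_def zext_def)
  qed
  then show "?dyn \<and> ?causal" using zero by auto
qed

end

lemma hankel_eqs_iff_shift_comb_zext:
  fixes z zd :: "int \<Rightarrow> nat \<Rightarrow> real"
  assumes g: "g \<in> carrier_vec (T - N - Tini + 1)" and Tini: "1 \<le> Tini" and K: "K < N"
    and T: "Tini + N \<le> T" and zero: "\<forall>t\<in>{1..int K}. \<forall>i<n. z t i = 0"
  shows "(hankel n (Tini - 1) zd 1 (int T - int N - 1) *\<^sub>v g = 0\<^sub>v ((Tini - 1) * n)
          \<and> hankel n (N - K) zd (int Tini) (int T - int K - 1) *\<^sub>v g = stackv n z (int K + 1) (int N))
     \<longleftrightarrow> (\<forall>t\<in>{1..int Tini + int N - int K - 1}. \<forall>i<n.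
            shift_comb g zd t i = zext z (t + (int K + 1 - int Tini)) i)"
proof -
  define d where "d = int K + 1 - int Tini"
  have cols: "dim_vec g = nat (int T - int N - 1 - 1 + 2 - int (Tini - 1))"
    "dim_vec g = nat (int T - int K - 1 - int Tini + 2 - int (N - K))"
    using g Tini K T by simp_all
  have "hankel n (Tini - 1) zd 1 (int T - int N - 1) *\<^sub>v g = stackv n (shift_comb g zd) 1 (int Tini - 1)"
    using hankel_mult_vec[OF cols(1)] Tini by simp
  moreover have "0\<^sub>v ((Tini - 1) * n) = stackv n (\<lambda>t. zext z (t + d)) 1 (int Tini - 1)"
  proof -
    have "stackv n (\<lambda>t. zext z (t + d)) 1 (int Tini - 1) = stackv n (\<lambda>_ _. 0) 1 (int Tini - 1)"
      using zero by (auto simp: stackv_eq_iff zext_def d_def)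
    moreover have "nat (int Tini - 1) = Tini - 1" using Tini by arith
    ultimately show ?thesis by (simp add: stackv_zero)
  qed
  ultimately have head: "hankel n (Tini - 1) zd 1 (int T - int N - 1) *\<^sub>v g = 0\<^sub>v ((Tini - 1) * n)
      \<longleftrightarrow> (\<forall>t\<in>{1..int Tini - 1}. \<forall>i<n. shift_comb g zd t i = zext z (t + d) i)"
    by (simp add: stackv_eq_iff)
  have "hankel n (N - K) zd (int Tini) (int T - int K - 1) *\<^sub>v g
      = stackv n (shift_comb g zd) (int Tini) (int Tini + int N - int K - 1)"
    using hankel_mult_vec[OF cols(2)] K by (simp add: algebra_simps)
  moreover have "stackv n z (int K + 1) (int N)
      = stackv n (\<lambda>t. zext z (t + d)) (int Tini) (int Tini + int N - int K - 1)"
  proof -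
    have "stackv n z (int K + 1) (int N) = stackv n (zext z) (int K + 1) (int N)"
      by (simp add: stackv_eq_iff zext_def)
    then show ?thesis by (simp add: stackv_shift d_def)
  qed
  ultimately have tail: "hankel n (N - K) zd (int Tini) (int T - int K - 1) *\<^sub>v g = stackv n z (int K + 1) (int N)
      \<longleftrightarrow> (\<forall>t\<in>{int Tini..int Tini + int N - int K - 1}. \<forall>i<n. shift_comb g zd t i = zext z (t + d) i)"
    by (simp add: stackv_eq_iff)
  have "{1..int Tini + int N - int K - 1} = {1..int Tini - 1} \<union> {int Tini..int Tini + int N - int K - 1}"
    using Tini K by auto
  then show ?thesis unfolding head tail d_def[symmetric] by blast
qed

lemma stacked_hankel_eq_iff:
  fixes u y ud yd :: "int \<Rightarrow> nat \<Rightarrow> real"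
  assumes g: "g \<in> carrier_vec (T - N - Tini + 1)" and Tini: "1 \<le> Tini" and K: "K < N"
    and T: "Tini + N \<le> T"
    and zero: "\<forall>t\<in>{1..int K}. (\<forall>i<nu. u t i = 0) \<and> (\<forall>i<ny. y t i = 0)"
  shows "(hankel nu (Tini - 1) ud 1 (int T - int N - 1)
          @\<^sub>r hankel ny (Tini - 1) yd 1 (int T - int N - 1)
          @\<^sub>r hankel nu (N - K) ud (int Tini) (int T - int K - 1)
          @\<^sub>r hankel ny (N - K) yd (int Tini) (int T - int K - 1)) *\<^sub>v g
        = 0\<^sub>v ((Tini - 1) * nu) @\<^sub>v 0\<^sub>v ((Tini - 1) * ny)
          @\<^sub>v stackv nu u (int K + 1) (int N) @\<^sub>v stackv ny y (int K + 1) (int N)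
     \<longleftrightarrow> (\<forall>t\<in>{1..int Tini + int N - int K - 1}. \<forall>i<nu.
            shift_comb g ud t i = zext u (t + (int K + 1 - int Tini)) i)
       \<and> (\<forall>t\<in>{1..int Tini + int N - int K - 1}. \<forall>i<ny.
            shift_comb g yd t i = zext y (t + (int K + 1 - int Tini)) i)"
proof -
  let ?C = "T - N - Tini + 1"
  have cols: "nat (int T - int N - 1 - 1 + 2 - int (Tini - 1)) = ?C"
    "nat (int T - int K - 1 - int Tini + 2 - int (N - K)) = ?C"
    using Tini K T by simp_all
  have head: "hankel n (Tini - 1) z 1 (int T - int N - 1) \<in> carrier_mat ((Tini - 1) * n) ?C"
    and tail: "hankel n (N - K) z (int Tini) (int T - int K - 1) \<in> carrier_mat ((N - K) * n) ?C"
    for n z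
    using hankel_carrier[of n "Tini - 1" z 1 "int T - int N - 1"]
      hankel_carrier[of n "N - K" z "int Tini" "int T - int K - 1"]
    unfolding cols by simp_all
  have u0: "\<forall>t\<in>{1..int K}. \<forall>i<nu. u t i = 0" and y0: "\<forall>t\<in>{1..int K}. \<forall>i<ny. y t i = 0"
    using zero by simp_all
  have u_carrier: "stackv nu u (int K + 1) (int N) \<in> carrier_vec ((N - K) * nu)"
    using K by (intro carrier_vecI) (simp add: nat_diff_distrib)
  note split = append_rows_mult_vec_eq_iff[OF head carrier_append_rows[OF head carrier_append_rows[OF tail tail]]
        g zero_carrier_vec]
      append_rows_mult_vec_eq_iff[OF head carrier_append_rows[OF tail tail] g zero_carrier_vec]
      append_rows_mult_vec_eq_iff[OF tail tail g u_carrier]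
  show ?thesis
    unfolding split hankel_eqs_iff_shift_comb_zext[OF g Tini K T u0, symmetric]
      hankel_eqs_iff_shift_comb_zext[OF g Tini K T y0, symmetric]
    by blast
qed

theorem lemma4:
  fixes nu ny Tini N T Lw j :: nat
    and Ahat Bhat :: "real mat"
    and uud yud uj yj :: "int \<Rightarrow> nat \<Rightarrow> real"
    and EW :: "nat \<Rightarrow> real" and w :: "nat \<Rightarrow> nat \<Rightarrow> real"
  assumes Tini_pos: "Tini \<ge> 1"
    and N_pos: "N \<ge> 1"
    and T_ge: "Tini + N \<le> T"
    and Ahat_dim: "Ahat \<in> carrier_mat ny (Tini * ny)"
    and Bhat_dim: "Bhat \<in> carrier_mat ny (Tini * nu)"
    and data_varx: "\<forall>k\<in>{1..int T}. \<forall>i<ny. yud k i =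
        (Ahat *\<^sub>v stackv ny yud (k - int Tini) (k - 1)
         + Bhat *\<^sub>v stackv nu uud (k - int Tini) (k - 1)) $ i"
    and rank_cond: "mrank (hankel nu (Tini + N) uud 1 (int T)
                           @\<^sub>r hankel ny Tini yud 1 (int T - int N))
                    = (Tini + N) * nu + Tini * ny"
    and j_range: "1 \<le> j" "j \<le> N * (Lw - 1)"
  shows "((\<forall>k\<in>{1..int N}. \<forall>i<ny. yj k i =
             (Ahat *\<^sub>v stackv ny (zext yj) (k - int Tini) (k - 1)
              + Bhat *\<^sub>v stackv nu (zext uj) (k - int Tini) (k - 1)) $ i
             + pce_coef EW w Lw j (nat (k - 1)) i)
          \<and> (\<forall>k\<in>{1..int (kprime Lw j)}. \<forall>i<nu. uj k i = 0))
     \<longleftrightarrow>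
         (\<exists>g. g \<in> carrier_vec (T - N - Tini + 1)
            \<and> (\<forall>k\<in>{1..int (kprime Lw j)}. (\<forall>i<nu. uj k i = 0) \<and> (\<forall>i<ny. yj k i = 0))
            \<and> (\<forall>i<ny. yj (int (kprime Lw j) + 1) i = w (pce_I Lw j) i)
            \<and> (hankel nu (Tini - 1) uud 1 (int T - int N - 1)
               @\<^sub>r hankel ny (Tini - 1) yud 1 (int T - int N - 1)
               @\<^sub>r hankel nu (N - kprime Lw j) uud (int Tini) (int T - int (kprime Lw j) - 1)
               @\<^sub>r hankel ny (N - kprime Lw j) yud (int Tini) (int T - int (kprime Lw j) - 1))
              *\<^sub>v g
              = 0\<^sub>v ((Tini - 1) * nu) @\<^sub>v 0\<^sub>v ((Tini - 1) * ny)
                @\<^sub>v stackv nu uj (int (kprime Lw j) + 1) (int N)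
                @\<^sub>v stackv ny yj (int (kprime Lw j) + 1) (int N))"
proof -
  interpret varx Ahat Bhat Tini ny nu
    using Ahat_dim Bhat_dim by unfold_locales
  define K where "K = kprime Lw j"
  have K: "K < N"
  proof -
    have "j - 1 < N * (Lw - 1)" using j_range by simp
    then show ?thesis unfolding K_def kprime_def by (simp add: less_mult_imp_div_less)
  qed
  have noise: "pce_coef EW w Lw j = (\<lambda>k. if K = k then w (pce_I Lw j) else (\<lambda>_. 0))"
    using j_range by (auto simp: pce_coef_def K_def)
  have data: "traj_on yud uud 1 (int T)"
    using data_varx by (simp add: traj_on_def predict_def)
  have shift: "traj_on (zext yj) (zext uj) (int K + 2) (int N) \<longleftrightarrow>
      traj_on (\<lambda>t. zext yj (t + (int K + 1 - int Tini))) (\<lambda>t. zext uj (t + (int K + 1 - int Tini)))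
        (int Tini + 1) (int Tini + int N - int K - 1)"
    by (simp add: traj_on_shift add.commute)
  have "int Tini + int N - int K - 1 \<le> int Tini + int N" by simp
  note data_comb = traj_on_iff_data_comb[OF data rank_cond T_ge this]
  show ?thesis
    unfolding noise K_def[symmetric] predict_def[symmetric] impulse_response_iff[OF K] shift data_comb
    using stacked_hankel_eq_iff[OF _ Tini_pos K T_ge, where u = uj and y = yj and ud = uud and yd = yud]
    by blast
qed

end
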